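(* Let $\psi,\psi_1,\psi_2,\dots$ be Archimedean generators with pseudo-inverses $\varphi,\varphi_1,\varphi_2,\dots$. Then $(\varphi_n)$ converges pointwise to $\varphi$ on $(0,1]$ if and only if $(\psi_n)$ converges uniformly to $\psi$ on $[0,\infty)$.
   Context: An Archimedean generator is a continuous non-increasing $\psi:[0,\infty)\to[0,1]$ with $\psi(0)=1$, $\lim_{z\to\infty}\psi(z)=0$, strictly decreasing on $[0,\inf\{z\in[0,\infty]:\psi(z)=0\}]$ (with $\inf\emptyset=\infty$), normalized so that $\psi(1)=1/2$. Its pseudo-inverse is $\varphi:[0,1]\to[0,\infty]$, $\varphi(y)=\inf\{z\in[0,\infty]:\psi(z)=y\}$. *)

theory Defs
  imports "HOL-Analysis.Analysis"
begin

text \<open>Generators are modelled as functions real => real; only their values on [0,oo) matter.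
  The point oo of [0,oo] is handled with extended reals, with psi(oo) = lim psi = 0.\<close>

definition zero_point :: "(real \<Rightarrow> real) \<Rightarrow> ereal" where
  "zero_point \<psi> = Inf ({ereal z | z. 0 \<le> z \<and> \<psi> z = 0} \<union> {\<infinity>})"

definition archimedean_generator :: "(real \<Rightarrow> real) \<Rightarrow> bool" where
  "archimedean_generator \<psi> \<longleftrightarrow>
     continuous_on {0..} \<psi> \<and>
     (\<forall>z\<ge>0. 0 \<le> \<psi> z \<and> \<psi> z \<le> 1) \<and>
     (\<forall>x y. 0 \<le> x \<longrightarrow> x \<le> y \<longrightarrow> \<psi> y \<le> \<psi> x) \<and>
     \<psi> 0 = 1 \<and>
     (\<psi> \<longlongrightarrow> 0) at_top \<and>
     (\<forall>x y. 0 \<le> x \<longrightarrow> x < y \<longrightarrow> ereal y \<le> zero_point \<psi> \<longrightarrow> \<psi> y < \<psi> x) \<and>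
     \<psi> 1 = 1/2"

definition pseudo_inverse :: "(real \<Rightarrow> real) \<Rightarrow> real \<Rightarrow> ereal" where
  "pseudo_inverse \<psi> y = Inf ({ereal z | z. 0 \<le> z \<and> \<psi> z = y} \<union> (if y = 0 then {\<infinity>} else {}))"

end

theory Submission
  imports Defs
begin

text \<open>On \<open>(0,1]\<close> the pseudo-inverse \<open>\<phi>\<close> is finite and forms a Galois connection with the
  generator: \<open>\<phi> y \<le> x \<longleftrightarrow> \<psi> x \<le> y\<close> for \<open>x \<ge> 0\<close>. If \<open>\<psi>\<^sub>n \<rightarrow> \<psi>\<close> pointwise, this connection
  traps \<open>\<phi>\<^sub>n y\<close> between \<open>\<phi> y \<pm> \<epsilon>\<close>; strict decrease of \<open>\<psi>\<close> below its zero is what makes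
  \<open>\<psi> (\<phi> y + \<epsilon>) < y\<close>. Conversely, if \<open>\<phi>\<^sub>n \<rightarrow> \<phi>\<close> on the grid \<open>k/N\<close>, then since \<open>\<phi>\<close> is strictly
  decreasing there, eventually \<open>\<phi>\<^sub>n ((k+1)/N) \<le> \<phi> (k/N)\<close> and \<open>\<phi> ((k+1)/N) \<le> \<phi>\<^sub>n (k/N)\<close>
  for all \<open>k\<close>, and through the Galois connection each of these comparisons of inverses
  becomes the bound \<open>\<psi>\<^sub>n \<le> \<psi> + 2/N\<close>, respectively \<open>\<psi> \<le> \<psi>\<^sub>n + 2/N\<close>, on all of \<open>[0,\<infinity>)\<close>.\<close>

text \<open>The real-valued part of \<open>pseudo_inverse\<close>: on \<open>(0,1]\<close> the infimum is attained and
  the two agree; outside \<open>(0,1]\<close> the value is junk.\<close>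

definition real_pseudo_inverse :: "(real \<Rightarrow> real) \<Rightarrow> real \<Rightarrow> real" where
  "real_pseudo_inverse g y = Inf {z. 0 \<le> z \<and> g z = y}"

lemma archimedean_generator_antimono:
  assumes "archimedean_generator g" "0 \<le> x" "x \<le> z"
  shows "g z \<le> g x"
  using assms unfolding archimedean_generator_def by blast

lemma archimedean_generator_bounds:
  assumes "archimedean_generator g" "0 \<le> x"
  shows "0 \<le> g x" "g x \<le> 1"
  using assms unfolding archimedean_generator_def by blast+

lemma archimedean_generator_level_nonempty:
  assumes "archimedean_generator g" "0 < y" "y \<le> 1"
  shows "\<exists>z\<ge>0. g z = y"
proof -
  have cont: "continuous_on {0..} g" and lim: "(g \<longlongrightarrow> 0) at_top" and "g 0 = 1"
    using assms(1) unfolding archimedean_generator_def by auto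
  obtain b where "b \<ge> 0" "g b < y"
    using order_tendstoD(2)[OF lim \<open>0 < y\<close>]
    by (metis eventually_at_top_linorder nle_le)
  moreover have "continuous_on {0..b} g"
    using cont by (rule continuous_on_subset) auto
  ultimately obtain z where "0 \<le> z" "g z = y"
    using IVT2'[of g b y 0] \<open>g 0 = 1\<close> \<open>y \<le> 1\<close> by fastforce
  then show ?thesis by auto
qed

lemma real_pseudo_inverse_least:
  assumes "archimedean_generator g" "0 < y" "y \<le> 1"
  shows "0 \<le> real_pseudo_inverse g y" "g (real_pseudo_inverse g y) = y"
    and "\<And>z. 0 \<le> z \<Longrightarrow> g z = y \<Longrightarrow> real_pseudo_inverse g y \<le> z"
proof -
  define S where "S = {z. 0 \<le> z \<and> g z = y}"
  have "continuous_on {0..} g"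
    using assms(1) unfolding archimedean_generator_def by auto
  then have "closed {z \<in> {0..}. g z = y}"
    by (rule continuous_closed_preimage_constant) simp
  moreover have "S = {z \<in> {0..}. g z = y}"
    by (auto simp: S_def)
  ultimately have "closed S"
    by simp
  moreover have "S \<noteq> {}"
    using archimedean_generator_level_nonempty[OF assms] by (auto simp: S_def)
  moreover have bdd: "bdd_below S"
    by (rule bdd_belowI[of _ 0]) (auto simp: S_def)
  ultimately have "Inf S \<in> S"
    using closed_contains_Inf by blast
  then show "0 \<le> real_pseudo_inverse g y" "g (real_pseudo_inverse g y) = y"
    by (auto simp: real_pseudo_inverse_def S_def)
  show "\<And>z. 0 \<le> z \<Longrightarrow> g z = y \<Longrightarrow> real_pseudo_inverse g y \<le> z"
    unfolding real_pseudo_inverse_def S_def[symmetric]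
    by (rule cInf_lower[OF _ bdd]) (auto simp: S_def)
qed

lemma pseudo_inverse_eq_real_pseudo_inverse:
  assumes "archimedean_generator g" "0 < y" "y \<le> 1"
  shows "pseudo_inverse g y = ereal (real_pseudo_inverse g y)"
proof -
  note least = real_pseudo_inverse_least[OF assms]
  have "pseudo_inverse g y = Inf {ereal z | z. 0 \<le> z \<and> g z = y}"
    using assms by (simp add: pseudo_inverse_def)
  also have "\<dots> = ereal (real_pseudo_inverse g y)"
    by (rule antisym; (rule Inf_lower | rule Inf_greatest)) (use least in auto)
  finally show ?thesis .
qed

lemma real_pseudo_inverse_le_iff:
  assumes "archimedean_generator g" "0 < y" "y \<le> 1" "0 \<le> x"
  shows "real_pseudo_inverse g y \<le> x \<longleftrightarrow> g x \<le> y"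
proof
  note least = real_pseudo_inverse_least[OF assms(1-3)]
  show "g x \<le> y" if "real_pseudo_inverse g y \<le> x"
    using archimedean_generator_antimono[OF assms(1) least(1) that] least(2) by simp
  show "real_pseudo_inverse g y \<le> x" if "g x \<le> y"
  proof (cases "x < real_pseudo_inverse g y")
    case True
    then have "y \<le> g x"
      using archimedean_generator_antimono[OF assms(1,4), of "real_pseudo_inverse g y"] least(2)
      by simp
    then show ?thesis
      using least(3)[OF assms(4)] that by simp
  qed simp
qed

lemma archimedean_generator_less_if_real_pseudo_inverse_less:
  assumes "archimedean_generator g" "0 < y" "y \<le> 1" "real_pseudo_inverse g y < x"
  shows "g x < y"
proof (cases "ereal x \<le> zero_point g")
  case True
  note least = real_pseudo_inverse_least[OF assms(1-3)]
  have "\<And>a b. 0 \<le> a \<Longrightarrow> a < b \<Longrightarrow> ereal b \<le> zero_point g \<Longrightarrow> g b < g a"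
    using assms(1) unfolding archimedean_generator_def by blast
  from this[OF least(1) assms(4) True] show ?thesis
    using least(2) by simp
next
  case False
  then obtain z where "0 \<le> z" "g z = 0" "z < x"
    by (auto simp: zero_point_def not_le Inf_less_iff)
  then show ?thesis
    using archimedean_generator_antimono[OF assms(1), of z x] \<open>0 < y\<close> by simp
qed

lemma real_pseudo_inverse_strict_antimono:
  assumes "archimedean_generator g" "0 < a" "a < b" "b \<le> 1"
  shows "real_pseudo_inverse g b < real_pseudo_inverse g a"
proof -
  have a: "0 \<le> real_pseudo_inverse g a" "g (real_pseudo_inverse g a) = a"
    using real_pseudo_inverse_least[OF assms(1,2)] assms by auto
  have "g (real_pseudo_inverse g b) = b"
    using real_pseudo_inverse_least[OF assms(1)] assms by simp
  moreover have "real_pseudo_inverse g b \<le> real_pseudo_inverse g a"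
    using real_pseudo_inverse_le_iff[OF assms(1) _ assms(4) a(1)] a(2) assms by simp
  ultimately show ?thesis
    using a(2) assms(3) by (metis order.not_eq_order_implies_strict order_less_irrefl)
qed

lemma archimedean_generator_le_transfer:
  assumes g: "archimedean_generator g" and h: "archimedean_generator h"
    and a: "0 < a" "a \<le> 1" and b: "0 < b" "b \<le> 1"
    and inv: "real_pseudo_inverse h b \<le> real_pseudo_inverse g a"
    and "0 \<le> x" "g x \<le> a"
  shows "h x \<le> b"
  using real_pseudo_inverse_le_iff[OF g a \<open>0 \<le> x\<close>] real_pseudo_inverse_le_iff[OF h b \<open>0 \<le> x\<close>]
    inv \<open>g x \<le> a\<close> by linarith

lemma exists_grid_point_above:
  fixes t :: real and N :: nat
  assumes "0 \<le> t" "t \<le> 1" "0 < N"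
  shows "\<exists>k\<in>{1..N}. t \<le> k / N \<and> k / N \<le> t + 1 / N"
proof -
  define k where "k = max 1 (nat \<lceil>N * t\<rceil>)"
  have "N * t \<le> k" "k \<le> N * t + 1" "1 \<le> k"
    unfolding k_def using assms(1) by (auto simp: of_nat_max) linarith+
  moreover have "k \<le> N"
    unfolding k_def using assms mult_left_le[of t "real N"] by (auto simp: ceiling_le_iff)
  ultimately show ?thesis
    using assms(3) by (intro bexI[of _ k]) (auto simp: field_simps)
qed

lemma archimedean_generator_le_plus_grid:
  fixes N :: nat
  assumes g: "archimedean_generator g" and h: "archimedean_generator h" and "0 < N"
    and grid: "\<forall>k\<in>{1..<N}. real_pseudo_inverse h ((real k + 1) / N) \<le> real_pseudo_inverse g (k / N)"
    and "0 \<le> x"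
  shows "h x \<le> g x + 2 / N"
proof -
  obtain k where k: "k \<in> {1..N}" "g x \<le> k / N" "k / N \<le> g x + 1 / N"
    using exists_grid_point_above archimedean_generator_bounds[OF g \<open>0 \<le> x\<close>] \<open>0 < N\<close> by blast
  show ?thesis
  proof (cases "k = N")
    case True
    then show ?thesis
      using archimedean_generator_bounds[OF h \<open>0 \<le> x\<close>] k \<open>0 < N\<close> by simp
  next
    case False
    then have "k \<in> {1..<N}" "real k + 1 \<le> N"
      using k(1) by auto
    then have "h x \<le> (real k + 1) / N"
      using archimedean_generator_le_transfer[OF g h _ _ _ _ _ \<open>0 \<le> x\<close> k(2)] grid k(1) \<open>0 < N\<close>
      by simp
    also have "\<dots> \<le> g x + 2 / N"
      using k(3) by (simp add: add_divide_distrib)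
    finally show ?thesis .
  qed
qed

lemma real_pseudo_inverse_tendsto_if_pointwise:
  assumes g: "archimedean_generator g" and G: "\<And>n. archimedean_generator (G n)"
    and lim: "\<And>x. 0 \<le> x \<Longrightarrow> (\<lambda>n. G n x) \<longlonglongrightarrow> g x"
    and y: "0 < y" "y \<le> 1"
  shows "(\<lambda>n. real_pseudo_inverse (G n) y) \<longlonglongrightarrow> real_pseudo_inverse g y"
proof (rule order_tendstoI)
  fix c assume "c < real_pseudo_inverse g y"
  show "\<forall>\<^sub>F n in sequentially. c < real_pseudo_inverse (G n) y"
  proof (cases "0 \<le> c")
    case True
    then have "y < g c"
      using real_pseudo_inverse_le_iff[OF g y True] \<open>c < _\<close> by simp
    with order_tendstoD(1)[OF lim[OF True]] have "\<forall>\<^sub>F n in sequentially. y < G n c" .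
    then show ?thesis
      by (rule eventually_mono) (meson real_pseudo_inverse_le_iff[OF G y True] not_le)
  next
    case False
    have "c < real_pseudo_inverse (G n) y" for n
      using real_pseudo_inverse_least(1)[OF G y, of n] False by linarith
    then show ?thesis
      by simp
  qed
next
  fix c assume "real_pseudo_inverse g y < c"
  define m where "m = (real_pseudo_inverse g y + c) / 2"
  have m: "0 \<le> m" "real_pseudo_inverse g y < m" "m < c"
    using real_pseudo_inverse_least(1)[OF g y] \<open>_ < c\<close> by (auto simp: m_def)
  have "g m < y"
    using archimedean_generator_less_if_real_pseudo_inverse_less[OF g y m(2)] .
  with order_tendstoD(2)[OF lim[OF m(1)]] have "\<forall>\<^sub>F n in sequentially. G n m < y" .
  then show "\<forall>\<^sub>F n in sequentially. real_pseudo_inverse (G n) y < c"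
    by (rule eventually_mono) (meson real_pseudo_inverse_le_iff[OF G y m(1)] m(3) less_imp_le le_less_trans)
qed

lemma eventually_real_pseudo_inverse_interlace:
  assumes g: "archimedean_generator g" and "0 < a" "a < b" "b \<le> 1"
    and lim_a: "(\<lambda>n. real_pseudo_inverse (G n) a) \<longlonglongrightarrow> real_pseudo_inverse g a"
    and lim_b: "(\<lambda>n. real_pseudo_inverse (G n) b) \<longlonglongrightarrow> real_pseudo_inverse g b"
  shows "\<forall>\<^sub>F n in sequentially.
           real_pseudo_inverse (G n) b \<le> real_pseudo_inverse g a \<and>
           real_pseudo_inverse g b \<le> real_pseudo_inverse (G n) a"
proof -
  have less: "real_pseudo_inverse g b < real_pseudo_inverse g a"
    using real_pseudo_inverse_strict_antimono[OF g] assms by blast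
  from order_tendstoD(2)[OF lim_b less] order_tendstoD(1)[OF lim_a less]
  show ?thesis
    by eventually_elim simp
qed

lemma uniform_limit_if_real_pseudo_inverse_tendsto:
  assumes g: "archimedean_generator g" and G: "\<And>n. archimedean_generator (G n)"
    and lim: "\<And>y. 0 < y \<Longrightarrow> y \<le> 1 \<Longrightarrow>
      (\<lambda>n. real_pseudo_inverse (G n) y) \<longlonglongrightarrow> real_pseudo_inverse g y"
  shows "uniform_limit {0..} G g sequentially"
  unfolding uniform_limit_iff
proof (intro allI impI)
  fix e :: real assume "0 < e"
  obtain N :: nat where N: "2 / e < N"
    using reals_Archimedean2 by blast
  moreover have "0 < 2 / e"
    using \<open>0 < e\<close> by simp
  ultimately have "real N > 0"
    by linarith
  then have "0 < N" "2 / N < e"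
    using N \<open>0 < e\<close> by (simp_all add: field_simps)
  have "\<forall>\<^sub>F n in sequentially.
          real_pseudo_inverse (G n) ((real k + 1) / N) \<le> real_pseudo_inverse g (k / N) \<and>
          real_pseudo_inverse g ((real k + 1) / N) \<le> real_pseudo_inverse (G n) (k / N)"
    if "k \<in> {1..<N}" for k
  proof -
    have levels: "0 < real k / N" "real k / N < (real k + 1) / N" "(real k + 1) / N \<le> 1"
      using that \<open>real N > 0\<close> by (simp_all add: divide_strict_right_mono divide_le_eq_1)
    then show ?thesis
      using lim[of "real k / N"] lim[of "(real k + 1) / N"]
      by (intro eventually_real_pseudo_inverse_interlace[OF g]) simp_all
  qed
  then have "\<forall>\<^sub>F n in sequentially. \<forall>k\<in>{1..<N}.
          real_pseudo_inverse (G n) ((real k + 1) / N) \<le> real_pseudo_inverse g (k / N) \<and>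
          real_pseudo_inverse g ((real k + 1) / N) \<le> real_pseudo_inverse (G n) (k / N)"
    by (intro eventually_ball_finite) auto
  then show "\<forall>\<^sub>F n in sequentially. \<forall>x\<in>{0..}. dist (G n x) (g x) < e"
  proof (rule eventually_mono, intro ballI)
    fix n and x :: real
    assume "\<forall>k\<in>{1..<N}.
          real_pseudo_inverse (G n) ((real k + 1) / N) \<le> real_pseudo_inverse g (k / N) \<and>
          real_pseudo_inverse g ((real k + 1) / N) \<le> real_pseudo_inverse (G n) (k / N)"
      and "x \<in> {0..}"
    then have "G n x \<le> g x + 2 / N" "g x \<le> G n x + 2 / N"
      using archimedean_generator_le_plus_grid[OF g G \<open>0 < N\<close>, of n]
        archimedean_generator_le_plus_grid[OF G g \<open>0 < N\<close>, of n]
      by auto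
    with \<open>2 / N < e\<close> show "dist (G n x) (g x) < e"
      by (simp add: dist_real_def abs_less_iff)
  qed
qed

theorem lemma4p3:
  fixes \<psi> :: "real \<Rightarrow> real" and \<Psi> :: "nat \<Rightarrow> real \<Rightarrow> real"
  assumes "archimedean_generator \<psi>"
    and "\<And>n. archimedean_generator (\<Psi> n)"
  shows "(\<forall>y\<in>{0<..1}. (\<lambda>n. pseudo_inverse (\<Psi> n) y) \<longlonglongrightarrow> pseudo_inverse \<psi> y)
         \<longleftrightarrow> uniform_limit {0..} \<Psi> \<psi> sequentially"
proof -
  have "(\<lambda>n. pseudo_inverse (\<Psi> n) y) \<longlonglongrightarrow> pseudo_inverse \<psi> y \<longleftrightarrow>
        (\<lambda>n. real_pseudo_inverse (\<Psi> n) y) \<longlonglongrightarrow> real_pseudo_inverse \<psi> y" if "y \<in> {0<..1}" for y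
    using that pseudo_inverse_eq_real_pseudo_inverse[OF assms(1)]
      pseudo_inverse_eq_real_pseudo_inverse[OF assms(2)] by (simp add: lim_ereal)
  moreover have "uniform_limit {0..} \<Psi> \<psi> sequentially \<Longrightarrow> 0 \<le> x \<Longrightarrow> (\<lambda>n. \<Psi> n x) \<longlonglongrightarrow> \<psi> x"
    for x using tendsto_uniform_limitI[where S="{0..}" and f=\<Psi> and l=\<psi>] by simp
  ultimately show ?thesis
    using uniform_limit_if_real_pseudo_inverse_tendsto[OF assms]
      real_pseudo_inverse_tendsto_if_pointwise[OF assms] by auto
qed

end
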